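(* Let $\mathbb{F}$ be an infinite field with $\operatorname{char}(\mathbb{F})\neq 2$ and let $G$ be a non-abelian group with a group involution $\ast$ and a non-trivial orientation $\sigma:G\to\{\pm1\}$ such that $gg^\ast\in N=\ker\sigma$ for all $g\in G$. Suppose $\mathbb{F}G$ is normal with respect to the oriented involution $\circledast$ and that $N$, with the restriction of $\ast$, is an SLC-group. Then $G$ has a unique non-identity commutator $s$, and $s$ is central in $G$.
   Context: A group involution on $G$ is a map $\ast:G\to G$ with $(gh)^\ast=h^\ast g^\ast$ and $(g^\ast)^\ast=g$ (the condition $gg^\ast\in N$ implies $N^\ast=N$). An orientation is a group homomorphism $\sigma:G\to\{\pm1\}$. The oriented involution is $(\sum_g\alpha_g g)^\circledast=\sum_g\alpha_g\sigma(g)g^\ast$ on $\mathbb{F}G$. $\mathbb{F}G$ is normal if $\alpha\alpha^\circledast=\alpha^\circledast\alpha$ for all $\alpha\in\mathbb{F}G$. $(g,h)=g^{-1}h^{-1}gh$; "$H$ has a unique non-identity commutator $s$" means $\{(g,h):g,h\in H\}=\{1,s\}$. A group $H$ is an LC-group if it is non-abelian and for all $g,h\in H$: $gh=hg$ iff at least one of $g,h,gh$ is in the center $\zeta(H)$. $H$ with involution $\ast$ is an SLC-group if it is an LC-group with a unique non-identity commutator $s$ and $h^\ast=h$ for $h\in\zeta(H)$, $h^\ast=sh$ for $h\notin\zeta(H)$. *)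

theory Defs
  imports "HOL-Algebra.Group"
begin

definition commutator :: "('g, 'b) monoid_scheme \<Rightarrow> 'g \<Rightarrow> 'g \<Rightarrow> 'g" where
  "commutator H g h = inv\<^bsub>H\<^esub> g \<otimes>\<^bsub>H\<^esub> inv\<^bsub>H\<^esub> h \<otimes>\<^bsub>H\<^esub> g \<otimes>\<^bsub>H\<^esub> h"

definition commutators :: "('g, 'b) monoid_scheme \<Rightarrow> 'g set" where
  "commutators H = {commutator H g h | g h. g \<in> carrier H \<and> h \<in> carrier H}"

definition grp_center :: "('g, 'b) monoid_scheme \<Rightarrow> 'g set" where
  "grp_center H = {z \<in> carrier H. \<forall>x \<in> carrier H. z \<otimes>\<^bsub>H\<^esub> x = x \<otimes>\<^bsub>H\<^esub> z}"

definition abelian :: "('g, 'b) monoid_scheme \<Rightarrow> bool" where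
  "abelian H \<longleftrightarrow> (\<forall>x \<in> carrier H. \<forall>y \<in> carrier H. x \<otimes>\<^bsub>H\<^esub> y = y \<otimes>\<^bsub>H\<^esub> x)"

definition unique_nonid_commutator :: "('g, 'b) monoid_scheme \<Rightarrow> 'g \<Rightarrow> bool" where
  "unique_nonid_commutator H s \<longleftrightarrow> s \<noteq> \<one>\<^bsub>H\<^esub> \<and> commutators H = {\<one>\<^bsub>H\<^esub>, s}"

definition LC_group :: "('g, 'b) monoid_scheme \<Rightarrow> bool" where
  "LC_group H \<longleftrightarrow> \<not> abelian H \<and>
     (\<forall>g \<in> carrier H. \<forall>h \<in> carrier H.
        g \<otimes>\<^bsub>H\<^esub> h = h \<otimes>\<^bsub>H\<^esub> g \<longleftrightarrow>
        (g \<in> grp_center H \<or> h \<in> grp_center H \<or> g \<otimes>\<^bsub>H\<^esub> h \<in> grp_center H))"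

definition SLC_group :: "('g, 'b) monoid_scheme \<Rightarrow> ('g \<Rightarrow> 'g) \<Rightarrow> bool" where
  "SLC_group H star \<longleftrightarrow> LC_group H \<and>
     (\<exists>s. unique_nonid_commutator H s \<and>
        (\<forall>h \<in> carrier H. (h \<in> grp_center H \<longrightarrow> star h = h) \<and>
                          (h \<notin> grp_center H \<longrightarrow> star h = s \<otimes>\<^bsub>H\<^esub> h)))"

definition group_involution :: "('g, 'b) monoid_scheme \<Rightarrow> ('g \<Rightarrow> 'g) \<Rightarrow> bool" where
  "group_involution G star \<longleftrightarrow>
     (\<forall>g \<in> carrier G. star g \<in> carrier G \<and> star (star g) = g) \<and>
     (\<forall>g \<in> carrier G. \<forall>h \<in> carrier G. star (g \<otimes>\<^bsub>G\<^esub> h) = star h \<otimes>\<^bsub>G\<^esub> star g)"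

definition orientation :: "('g, 'b) monoid_scheme \<Rightarrow> ('g \<Rightarrow> int) \<Rightarrow> bool" where
  "orientation G \<sigma> \<longleftrightarrow> (\<forall>g \<in> carrier G. \<sigma> g \<in> {1, -1}) \<and>
     (\<forall>g \<in> carrier G. \<forall>h \<in> carrier G. \<sigma> (g \<otimes>\<^bsub>G\<^esub> h) = \<sigma> g * \<sigma> h)"

definition orient_kernel :: "('g, 'b) monoid_scheme \<Rightarrow> ('g \<Rightarrow> int) \<Rightarrow> 'g set" where
  "orient_kernel G \<sigma> = {g \<in> carrier G. \<sigma> g = 1}"

definition grp_ring :: "('g, 'b) monoid_scheme \<Rightarrow> ('g \<Rightarrow> 'f::field) set" where
  "grp_ring G = {\<alpha>. finite {g. \<alpha> g \<noteq> 0} \<and> {g. \<alpha> g \<noteq> 0} \<subseteq> carrier G}"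

definition grp_ring_mult :: "('g, 'b) monoid_scheme \<Rightarrow> ('g \<Rightarrow> 'f::field) \<Rightarrow> ('g \<Rightarrow> 'f) \<Rightarrow> ('g \<Rightarrow> 'f)" where
  "grp_ring_mult G \<alpha> \<beta> = (\<lambda>x. if x \<in> carrier G
      then (\<Sum>g \<in> {g \<in> carrier G. \<alpha> g \<noteq> 0}. \<alpha> g * \<beta> (inv\<^bsub>G\<^esub> g \<otimes>\<^bsub>G\<^esub> x)) else 0)"

text \<open>Oriented involution: (\<Sum> a_g g)^\<circledast> = \<Sum> a_g \<sigma>(g) g^*; coefficient at h is a_{h*} \<sigma>(h*).\<close>
definition oriented_inv :: "('g, 'b) monoid_scheme \<Rightarrow> ('g \<Rightarrow> 'g) \<Rightarrow> ('g \<Rightarrow> int) \<Rightarrow> ('g \<Rightarrow> 'f::field) \<Rightarrow> ('g \<Rightarrow> 'f)" where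
  "oriented_inv G star \<sigma> \<alpha> = (\<lambda>h. if h \<in> carrier G then of_int (\<sigma> (star h)) * \<alpha> (star h) else 0)"

definition grp_ring_normal :: "'f::field itself \<Rightarrow> ('g, 'b) monoid_scheme \<Rightarrow> ('g \<Rightarrow> 'g) \<Rightarrow> ('g \<Rightarrow> int) \<Rightarrow> bool" where
  "grp_ring_normal (T :: 'f itself) G star \<sigma> \<longleftrightarrow>
     (\<forall>\<alpha> \<in> (grp_ring G :: ('g \<Rightarrow> 'f) set).
        grp_ring_mult G \<alpha> (oriented_inv G star \<sigma> \<alpha>) = grp_ring_mult G (oriented_inv G star \<sigma> \<alpha>) \<alpha>)"

end

theory Submission
  imports Defs "HOL-Algebra.Coset"
begin

text \<open>
  Comparing coefficients in the normality relation for the group ring elements x and x + y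
  (with \<sigma>(x) = \<sigma>(y)) shows x x* = x* x and x y* \<in> {x* y, y* x}; the second needs
  char F \<noteq> 2, since otherwise a coefficient 1 or 2 would have to vanish.
  The unique non-identity commutator s of the normal subgroup N = ker \<sigma> is fixed by conjugation,
  hence central in G, and s is an involution.
  For x \<notin> N and n \<in> N apply the second relation to y = x n: since x x* is fixed by * it is central
  in N, and n* \<in> {n, s n}, which forces (x, n) \<in> {1, s}.
  As N has index 2, every commutator of G is of this form or a commutator of N.
\<close>

context group
begin

lemma inv_mult_cancel_left [simp]:
  "x \<in> carrier G \<Longrightarrow> y \<in> carrier G \<Longrightarrow> inv x \<otimes> (x \<otimes> y) = y"
  by (simp add: m_assoc [symmetric])

lemma mult_inv_cancel_left [simp]:
  "x \<in> carrier G \<Longrightarrow> y \<in> carrier G \<Longrightarrow> x \<otimes> (inv x \<otimes> y) = y"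
  by (simp add: m_assoc [symmetric])

lemma commutator_closed [intro, simp]:
  "x \<in> carrier G \<Longrightarrow> y \<in> carrier G \<Longrightarrow> commutator G x y \<in> carrier G"
  by (simp add: commutator_def)

lemma commutator_eq_iff:
  assumes "x \<in> carrier G" "y \<in> carrier G" "c \<in> carrier G"
  shows "commutator G x y = c \<longleftrightarrow> x \<otimes> y = y \<otimes> x \<otimes> c"
proof -
  have "commutator G x y = inv (y \<otimes> x) \<otimes> (x \<otimes> y)"
    using assms by (simp add: commutator_def inv_mult_group m_assoc)
  then show ?thesis
    using assms by (metis inv_solve_left m_closed)
qed

lemma commutator_eq_one_iff:
  "x \<in> carrier G \<Longrightarrow> y \<in> carrier G \<Longrightarrow> commutator G x y = \<one> \<longleftrightarrow> x \<otimes> y = y \<otimes> x"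
  by (simp add: commutator_eq_iff)

lemma commutator_swap:
  "x \<in> carrier G \<Longrightarrow> y \<in> carrier G \<Longrightarrow> commutator G y x = inv (commutator G x y)"
  by (simp add: commutator_def inv_mult_group m_assoc)

lemma commutator_mult_right:
  "x \<in> carrier G \<Longrightarrow> n \<in> carrier G \<Longrightarrow> commutator G x (x \<otimes> n) = commutator G x n"
  by (simp add: commutator_def inv_mult_group m_assoc)

lemma commutator_conj:
  assumes "z \<in> carrier G" "a \<in> carrier G" "b \<in> carrier G"
  shows "z \<otimes> commutator G a b \<otimes> inv z = commutator G (z \<otimes> a \<otimes> inv z) (z \<otimes> b \<otimes> inv z)"
  using assms by (simp add: commutator_def inv_mult_group m_assoc)

lemma commutators_subgroup:
  assumes "subgroup N G"
  shows "commutators (G\<lparr>carrier := N\<rparr>) = {commutator G a b | a b. a \<in> N \<and> b \<in> N}"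
  using assms by (force simp: commutators_def commutator_def)

lemma unique_nonid_commutator_inv:
  assumes "unique_nonid_commutator G s"
  shows "inv s = s"
proof -
  from assms obtain a b where ab: "a \<in> carrier G" "b \<in> carrier G" "s = commutator G a b"
    and C: "commutators G = {\<one>, s}" and "s \<noteq> \<one>"
    unfolding unique_nonid_commutator_def commutators_def by blast
  have "inv s \<in> commutators G"
    using ab by (auto simp: commutators_def commutator_swap[symmetric])
  moreover have "inv s \<noteq> \<one>"
    using \<open>s \<noteq> \<one>\<close> ab by (metis commutator_closed inv_eq_1_iff)
  ultimately show ?thesis using C by blast
qed

lemma subgroup_unique_nonid_commutator_inv:
  assumes sub: "subgroup N G" and s: "unique_nonid_commutator (G\<lparr>carrier := N\<rparr>) s"
  shows "inv s = s"
proof -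
  have "s \<in> N"
    using s commutators_subgroup [OF sub] sub
    by (auto simp: unique_nonid_commutator_def commutator_def subgroup_def)
  then show ?thesis
    using group.unique_nonid_commutator_inv [OF subgroup_imp_group [OF sub] s] sub by simp
qed

lemma unique_nonid_commutator_from_subgroup:
  assumes sub: "subgroup N G" and s: "unique_nonid_commutator (G\<lparr>carrier := N\<rparr>) s"
    and C: "\<And>x y. x \<in> carrier G \<Longrightarrow> y \<in> carrier G \<Longrightarrow> commutator G x y \<in> {\<one>, s}"
  shows "unique_nonid_commutator G s"
proof -
  obtain a b where "a \<in> N" "b \<in> N" "s = commutator G a b"
    using s commutators_subgroup [OF sub] by (auto simp: unique_nonid_commutator_def)
  then have "s \<in> commutators G"
    using subgroup.mem_carrier [OF sub] by (auto simp: commutators_def)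
  moreover have "\<one> \<in> commutators G"
    by (force simp: commutators_def commutator_def)
  ultimately show ?thesis
    using s C by (auto simp: unique_nonid_commutator_def commutators_def)
qed

lemma normal_unique_nonid_commutator_central:
  assumes N: "N \<lhd> G" and s: "unique_nonid_commutator (G\<lparr>carrier := N\<rparr>) s"
  shows "s \<in> grp_center G"
proof -
  have sub: "subgroup N G" using N normal_imp_subgroup by blast
  have C: "commutators (G\<lparr>carrier := N\<rparr>) = {\<one>, s}" and "s \<noteq> \<one>"
    using s by (auto simp: unique_nonid_commutator_def)
  then obtain a b where ab: "a \<in> N" "b \<in> N" and s_ab: "s = commutator G a b"
    using commutators_subgroup [OF sub] by blast
  have abG: "a \<in> carrier G" "b \<in> carrier G"
    using ab subgroup.mem_carrier [OF sub] by auto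
  then have sG: "s \<in> carrier G" by (simp add: s_ab)
  have "s \<otimes> z = z \<otimes> s" if z: "z \<in> carrier G" for z
  proof -
    have "z \<otimes> s \<otimes> inv z = commutator G (z \<otimes> a \<otimes> inv z) (z \<otimes> b \<otimes> inv z)"
      using z abG by (simp add: s_ab commutator_conj)
    moreover have "z \<otimes> a \<otimes> inv z \<in> N" "z \<otimes> b \<otimes> inv z \<in> N"
      using normal.inv_op_closed2 [OF N z] ab by auto
    ultimately have "z \<otimes> s \<otimes> inv z \<in> {\<one>, s}"
      using C commutators_subgroup [OF sub] by blast
    moreover have "z \<otimes> s \<otimes> inv z \<noteq> \<one>"
      using \<open>s \<noteq> \<one>\<close> z sG by (simp add: inv_solve_right')
    ultimately show ?thesis
      using z sG by (simp add: inv_solve_right')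
  qed
  then show ?thesis using sG by (auto simp: grp_center_def)
qed

end

lemma unique_nonid_commutator_unique:
  "unique_nonid_commutator H s \<Longrightarrow> unique_nonid_commutator H t \<Longrightarrow> s = t"
  by (auto simp: unique_nonid_commutator_def doubleton_eq_iff)

lemma SLC_group_star:
  assumes "SLC_group H star" and "unique_nonid_commutator H s" and "h \<in> carrier H"
  shows "star h = (if h \<in> grp_center H then h else s \<otimes>\<^bsub>H\<^esub> h)"
proof -
  obtain t where t: "unique_nonid_commutator H t"
    and star_t: "(h \<in> grp_center H \<longrightarrow> star h = h) \<and>
                 (h \<notin> grp_center H \<longrightarrow> star h = t \<otimes>\<^bsub>H\<^esub> h)"
    using assms(1,3) unfolding SLC_group_def by blast
  then show ?thesis
    using unique_nonid_commutator_unique [OF assms(2) t] by simp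
qed

lemma (in group) SLC_group_star_fixed_central:
  assumes slc: "SLC_group G star" and s: "unique_nonid_commutator G s"
    and h: "h \<in> carrier G" and "star h = h"
  shows "h \<in> grp_center G"
proof (rule ccontr)
  assume "h \<notin> grp_center G"
  then have "s \<otimes> h = h" using SLC_group_star [OF slc s h] \<open>star h = h\<close> by simp
  moreover have "s \<in> carrier G" "s \<noteq> \<one>"
    using s by (auto simp: unique_nonid_commutator_def commutators_def)
  ultimately show False using h by simp
qed

lemma orientation_cases:
  "orientation G \<sigma> \<Longrightarrow> g \<in> carrier G \<Longrightarrow> \<sigma> g = 1 \<or> \<sigma> g = -1"
  by (auto simp: orientation_def)

lemma orientation_mult:
  "orientation G \<sigma> \<Longrightarrow> g \<in> carrier G \<Longrightarrow> h \<in> carrier G \<Longrightarrow>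
    \<sigma> (g \<otimes>\<^bsub>G\<^esub> h) = \<sigma> g * \<sigma> h"
  by (simp add: orientation_def)

lemma orientation_square:
  "orientation G \<sigma> \<Longrightarrow> g \<in> carrier G \<Longrightarrow> \<sigma> g * \<sigma> g = 1"
  by (auto simp: orientation_def)

lemma orientation_of_int_nonzero:
  "orientation G \<sigma> \<Longrightarrow> g \<in> carrier G \<Longrightarrow> of_int (\<sigma> g) \<noteq> (0::'f::field)"
  by (auto simp: orientation_def)

lemma (in group) orientation_one:
  assumes "orientation G \<sigma>"
  shows "\<sigma> \<one> = 1"
  using orientation_mult [OF assms, of \<one> \<one>] orientation_square [OF assms, of \<one>] by simp

lemma (in group) orientation_inv:
  assumes "orientation G \<sigma>" "x \<in> carrier G"
  shows "\<sigma> (inv x) = \<sigma> x"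
proof -
  have "\<sigma> (inv x) = \<sigma> (inv x) * (\<sigma> x * \<sigma> x)"
    using orientation_square [OF assms] by simp
  also have "\<dots> = \<sigma> x"
    using assms by (simp add: mult.assoc [symmetric] orientation_mult [symmetric] orientation_one)
  finally show ?thesis .
qed

lemma (in group) orient_kernel_normal:
  assumes "orientation G \<sigma>"
  shows "orient_kernel G \<sigma> \<lhd> G"
  unfolding normal_inv_iff
proof (intro conjI ballI subgroupI)
qed (auto simp: orient_kernel_def orientation_mult [OF assms] orientation_inv [OF assms]
          orientation_square [OF assms] orientation_one [OF assms])

lemma (in group) commutators_from_orient_kernel:
  assumes ori: "orientation G \<sigma>" and C: "\<And>c. c \<in> C \<Longrightarrow> inv c \<in> C"
    and kernel: "\<And>a b. a \<in> orient_kernel G \<sigma> \<Longrightarrow> b \<in> orient_kernel G \<sigma> \<Longrightarrow>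
                   commutator G a b \<in> C"
    and outside: "\<And>x n. x \<in> carrier G \<Longrightarrow> \<sigma> x \<noteq> 1 \<Longrightarrow> n \<in> orient_kernel G \<sigma> \<Longrightarrow>
                     commutator G x n \<in> C"
    and x: "x \<in> carrier G" and y: "y \<in> carrier G"
  shows "commutator G x y \<in> C"
proof (cases "\<sigma> x = 1"; cases "\<sigma> y = 1")
  assume "\<sigma> x = 1" "\<sigma> y = 1"
  then show ?thesis using kernel x y by (simp add: orient_kernel_def)
next
  assume "\<sigma> x = 1" "\<sigma> y \<noteq> 1"
  then have "commutator G y x \<in> C" using outside x y by (simp add: orient_kernel_def)
  then show ?thesis using C x y by (metis commutator_swap)
next
  assume "\<sigma> x \<noteq> 1" "\<sigma> y = 1"
  then show ?thesis using outside x y by (simp add: orient_kernel_def)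
next
  assume "\<sigma> x \<noteq> 1" "\<sigma> y \<noteq> 1"
  then have "\<sigma> x = -1" "\<sigma> y = -1"
    using x y orientation_cases [OF ori] by auto
  then have "inv x \<otimes> y \<in> orient_kernel G \<sigma>"
    using x y by (simp add: orient_kernel_def orientation_mult [OF ori] orientation_inv [OF ori])
  moreover have "commutator G x y = commutator G x (inv x \<otimes> y)"
    using x y commutator_mult_right [of x "inv x \<otimes> y"] by simp
  ultimately show ?thesis using outside \<open>\<sigma> x \<noteq> 1\<close> x by simp
qed

lemma group_involution_closed:
  "group_involution G star \<Longrightarrow> g \<in> carrier G \<Longrightarrow> star g \<in> carrier G"
  by (simp add: group_involution_def)

lemma group_involution_involutive:
  "group_involution G star \<Longrightarrow> g \<in> carrier G \<Longrightarrow> star (star g) = g"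
  by (simp add: group_involution_def)

lemma group_involution_inj:
  assumes "group_involution G star" "g \<in> carrier G" "h \<in> carrier G"
  shows "star g = star h \<longleftrightarrow> g = h"
proof
  assume "star g = star h"
  then have "star (star g) = star (star h)" by (rule arg_cong)
  then show "g = h"
    by (simp only: group_involution_involutive [OF assms(1,2)] group_involution_involutive [OF assms(1,3)])
qed simp

lemma group_involution_mult:
  "group_involution G star \<Longrightarrow> g \<in> carrier G \<Longrightarrow> h \<in> carrier G \<Longrightarrow>
    star (g \<otimes>\<^bsub>G\<^esub> h) = star h \<otimes>\<^bsub>G\<^esub> star g"
  by (simp add: group_involution_def)

lemma group_involution_image_subset:
  "group_involution G star \<Longrightarrow> S \<subseteq> carrier G \<Longrightarrow> star ` S \<subseteq> carrier G"
  by (auto simp: group_involution_def)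

lemma group_involution_mem_image_iff:
  assumes "group_involution G star" "S \<subseteq> carrier G" "h \<in> carrier G"
  shows "h \<in> star ` S \<longleftrightarrow> star h \<in> S"
proof
  assume "h \<in> star ` S"
  then obtain g where "g \<in> S" "h = star g" by blast
  then show "star h \<in> S"
    using group_involution_involutive [OF assms(1)] assms(2) by auto
next
  assume "star h \<in> S"
  then have "star (star h) \<in> star ` S" by blast
  then show "h \<in> star ` S"
    using group_involution_involutive [OF assms(1,3)] by simp
qed

lemma (in group) mult_star_central_in_subgroup:
  assumes inv: "group_involution G star" and sub: "subgroup N G"
    and slc: "SLC_group (G\<lparr>carrier := N\<rparr>) star"
    and s: "unique_nonid_commutator (G\<lparr>carrier := N\<rparr>) s"
    and x: "x \<in> carrier G" and xN: "x \<otimes> star x \<in> N"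
  shows "x \<otimes> star x \<in> grp_center (G\<lparr>carrier := N\<rparr>)"
proof (rule group.SLC_group_star_fixed_central [OF subgroup_imp_group [OF sub] slc s])
  show "star (x \<otimes> star x) = x \<otimes> star x"
    using x group_involution_closed [OF inv x]
    by (simp add: group_involution_mult [OF inv] group_involution_involutive [OF inv])
qed (use xN in simp)

lemma grp_ring_mult_indicator_left:
  fixes \<beta> :: "'g \<Rightarrow> 'f::field"
  assumes "S \<subseteq> carrier G" "z \<in> carrier G" "a \<noteq> 0"
  shows "grp_ring_mult G (\<lambda>g. a * of_bool (g \<in> S)) \<beta> z = a * (\<Sum>g\<in>S. \<beta> (inv\<^bsub>G\<^esub> g \<otimes>\<^bsub>G\<^esub> z))"
proof -
  have "{g \<in> carrier G. a * of_bool (g \<in> S) \<noteq> 0} = S"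
    using assms by auto
  then show ?thesis
    using assms(2) by (simp add: grp_ring_mult_def sum_distrib_left)
qed

lemma oriented_inv_indicator:
  assumes inv: "group_involution G star" and S: "S \<subseteq> carrier G"
    and \<sigma>S: "\<And>g. g \<in> S \<Longrightarrow> \<sigma> g = c"
  shows "oriented_inv G star \<sigma> (\<lambda>g. of_bool (g \<in> S)) = (\<lambda>h. of_int c * of_bool (h \<in> star ` S))"
proof
  fix h
  show "oriented_inv G star \<sigma> (\<lambda>g. of_bool (g \<in> S)) h = of_int c * of_bool (h \<in> star ` S)"
    using group_involution_image_subset [OF inv S] group_involution_mem_image_iff [OF inv S, of h] \<sigma>S
    by (auto simp: oriented_inv_def)
qed

text \<open>The two sides are the coefficients of z in \<alpha> \<alpha>^\<circledast> and \<alpha>^\<circledast> \<alpha> for \<alpha> = \<Sum>S.\<close>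

lemma grp_ring_normal_indicator_balance:
  fixes G :: "('g, 'b) monoid_scheme"
  assumes nrm: "grp_ring_normal TYPE('f::field) G star \<sigma>" and inv: "group_involution G star"
    and S: "finite S" "S \<subseteq> carrier G" and \<sigma>S: "\<And>g. g \<in> S \<Longrightarrow> \<sigma> g = c"
    and c: "of_int c \<noteq> (0::'f)"
    and z: "z \<in> carrier G"
  shows "of_nat (card {g \<in> S. inv\<^bsub>G\<^esub> g \<otimes>\<^bsub>G\<^esub> z \<in> star ` S}) =
         (of_nat (card {t \<in> star ` S. inv\<^bsub>G\<^esub> t \<otimes>\<^bsub>G\<^esub> z \<in> S}) :: 'f)"
proof -
  define \<alpha> :: "'g \<Rightarrow> 'f" where "\<alpha> = (\<lambda>g. of_bool (g \<in> S))"
  have \<alpha>_star: "oriented_inv G star \<sigma> \<alpha> = (\<lambda>h. of_int c * of_bool (h \<in> star ` S))"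
    unfolding \<alpha>_def using oriented_inv_indicator [OF inv S(2) \<sigma>S] .
  have star_S: "star ` S \<subseteq> carrier G"
    using group_involution_image_subset [OF inv S(2)] .
  have "\<alpha> \<in> grp_ring G"
    using S by (auto simp: grp_ring_def \<alpha>_def elim: finite_subset [rotated])
  then have "grp_ring_mult G \<alpha> (oriented_inv G star \<sigma> \<alpha>) z =
             grp_ring_mult G (oriented_inv G star \<sigma> \<alpha>) \<alpha> z"
    using nrm by (simp add: grp_ring_normal_def)
  also have "grp_ring_mult G \<alpha> (oriented_inv G star \<sigma> \<alpha>) z =
             of_int c * (\<Sum>g\<in>S. of_bool (inv\<^bsub>G\<^esub> g \<otimes>\<^bsub>G\<^esub> z \<in> star ` S))"
    using grp_ring_mult_indicator_left [OF S(2) z, of 1 "oriented_inv G star \<sigma> \<alpha>"]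
    by (simp add: \<alpha>_star sum_distrib_left flip: \<alpha>_def)
  also have "grp_ring_mult G (oriented_inv G star \<sigma> \<alpha>) \<alpha> z =
             of_int c * (\<Sum>t\<in>star ` S. of_bool (inv\<^bsub>G\<^esub> t \<otimes>\<^bsub>G\<^esub> z \<in> S))"
    unfolding \<alpha>_star using grp_ring_mult_indicator_left [OF star_S z c, of \<alpha>] by (simp add: \<alpha>_def)
  finally show ?thesis
    using c S(1) by (simp add: Collect_conj_eq Int_commute)
qed

lemma (in group) grp_ring_normal_star_commute:
  assumes nrm: "grp_ring_normal TYPE('f::field) G star \<sigma>" and inv: "group_involution G star"
    and ori: "orientation G \<sigma>" and x: "x \<in> carrier G"
  shows "x \<otimes> star x = star x \<otimes> x"
proof (rule ccontr)
  assume ne: "x \<otimes> star x \<noteq> star x \<otimes> x"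
  have sx: "star x \<in> carrier G" using group_involution_closed [OF inv x] .
  have "(of_nat (card {g \<in> {x}. inv g \<otimes> (x \<otimes> star x) \<in> star ` {x}}) :: 'f) =
        of_nat (card {t \<in> star ` {x}. inv t \<otimes> (x \<otimes> star x) \<in> {x}})"
    by (rule grp_ring_normal_indicator_balance [OF nrm inv, where c = "\<sigma> x"])
      (use x sx orientation_of_int_nonzero [OF ori x] in auto)
  also have "{g \<in> {x}. inv g \<otimes> (x \<otimes> star x) \<in> star ` {x}} = {x}"
    using x sx by auto
  also have "{t \<in> star ` {x}. inv t \<otimes> (x \<otimes> star x) \<in> {x}} = {}"
    using x sx ne by (auto simp: inv_solve_left')
  finally show False by simp
qed

lemma (in group) grp_ring_normal_star_pair:
  assumes nrm: "grp_ring_normal TYPE('f::field) G star \<sigma>" and inv: "group_involution G star"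
    and ori: "orientation G \<sigma>" and two: "(2::'f) \<noteq> 0"
    and x: "x \<in> carrier G" and y: "y \<in> carrier G" and \<sigma>xy: "\<sigma> x = \<sigma> y" and "x \<noteq> y"
  shows "x \<otimes> star y = star x \<otimes> y \<or> x \<otimes> star y = star y \<otimes> x"
proof (rule ccontr)
  assume ne: "\<not> ?thesis"
  have sx: "star x \<in> carrier G" and sy: "star y \<in> carrier G"
    using group_involution_closed [OF inv] x y by auto
  have "star x \<noteq> star y"
    using group_involution_inj [OF inv x y] \<open>x \<noteq> y\<close> by simp
  have cx: "x \<otimes> star x = star x \<otimes> x" and cy: "y \<otimes> star y = star y \<otimes> y"
    using grp_ring_normal_star_commute [OF nrm inv ori] x y by auto
  define z where "z = x \<otimes> star y"
  have z: "z \<in> carrier G" using x sy by (simp add: z_def)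
  have "inv x \<otimes> z \<in> star ` {x, y}"
    using x sy by (simp add: z_def)
  then have "{g \<in> {x, y}. inv g \<otimes> z \<in> star ` {x, y}} \<in> {{x}, {x, y}}"
    by auto
  then have card_12: "card {g \<in> {x, y}. inv g \<otimes> z \<in> star ` {x, y}} \<in> {1, 2}"
    using \<open>x \<noteq> y\<close> by auto
  have "(of_nat (card {g \<in> {x, y}. inv g \<otimes> z \<in> star ` {x, y}}) :: 'f) =
        of_nat (card {t \<in> star ` {x, y}. inv t \<otimes> z \<in> {x, y}})"
    by (rule grp_ring_normal_indicator_balance [OF nrm inv, where c = "\<sigma> x"])
      (use x y z \<sigma>xy orientation_of_int_nonzero [OF ori x] in auto)
  also have "{t \<in> star ` {x, y}. inv t \<otimes> z \<in> {x, y}} = {}"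
    using x y sx sy ne \<open>x \<noteq> y\<close> \<open>star x \<noteq> star y\<close>
    by (auto simp: z_def inv_solve_left' cx [symmetric] cy [symmetric])
  finally show False
    using card_12 two by auto
qed

text \<open>Here e stands for n*, which the SLC structure of the kernel restricts to n or s n.\<close>

lemma (in group) commutator_twist_cases:
  assumes x: "x \<in> carrier G" and n: "n \<in> carrier G"
    and s: "s \<in> grp_center G" "inv s = s"
    and e: "e = n \<or> e = s \<otimes> n" and twist: "x \<otimes> e = e \<otimes> x \<or> x \<otimes> e = n \<otimes> x"
  shows "commutator G x n \<in> {\<one>, s}"
proof -
  have sG: "s \<in> carrier G" and sx: "s \<otimes> x = x \<otimes> s" and sn: "s \<otimes> n = n \<otimes> s"
    using s x n by (auto simp: grp_center_def)
  consider "x \<otimes> n = n \<otimes> x" | "x \<otimes> n = n \<otimes> x \<otimes> s"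
  proof (cases "e = n")
    case True
    then show thesis using twist that(1) by blast
  next
    case False
    then have e: "e = s \<otimes> n" using e by blast
    have xe: "x \<otimes> e = s \<otimes> (x \<otimes> n)"
      using x n sG sx by (simp add: e m_assoc [symmetric])
    show thesis using twist
    proof
      assume "x \<otimes> e = e \<otimes> x"
      then have "s \<otimes> (x \<otimes> n) = e \<otimes> x" by (simp only: xe)
      then have "s \<otimes> (x \<otimes> n) = s \<otimes> (n \<otimes> x)"
        using x n sG by (simp add: e m_assoc)
      then show thesis using that(1) x n sG by simp
    next
      assume "x \<otimes> e = n \<otimes> x"
      then have "s \<otimes> (x \<otimes> n) = n \<otimes> x" by (simp only: xe)
      then have "x \<otimes> n = inv s \<otimes> (n \<otimes> x)"
        using x n sG by (simp add: inv_solve_left)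
      also have "\<dots> = n \<otimes> x \<otimes> s"
        using x n sG s(2) sx sn by (metis m_assoc)
      finally show thesis using that(2) by blast
    qed
  qed
  then show ?thesis
    using x n sG by cases (simp_all add: commutator_eq_iff)
qed

lemma (in group) commutator_outside_kernel:
  assumes nrm: "grp_ring_normal TYPE('f::field) G star \<sigma>" and inv: "group_involution G star"
    and ori: "orientation G \<sigma>" and two: "(2::'f) \<noteq> 0"
    and s: "s \<in> grp_center G" "inv s = s"
    and x: "x \<in> carrier G" "\<sigma> x \<noteq> 1" and n: "n \<in> orient_kernel G \<sigma>"
    and norm_comm: "x \<otimes> star x \<otimes> n = n \<otimes> (x \<otimes> star x)"
    and star_n: "star n = n \<or> star n = s \<otimes> n"
  shows "commutator G x n \<in> {\<one>, s}"
proof (cases "n = \<one>")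
  case True
  then show ?thesis using x by (simp add: commutator_eq_one_iff)
next
  case False
  have nG: "n \<in> carrier G" and "\<sigma> n = 1" using n by (auto simp: orient_kernel_def)
  have sx: "star x \<in> carrier G" and sn: "star n \<in> carrier G"
    using group_involution_closed [OF inv] x nG by auto
  have "x \<otimes> star (x \<otimes> n) = star x \<otimes> (x \<otimes> n) \<or>
        x \<otimes> star (x \<otimes> n) = star (x \<otimes> n) \<otimes> x"
  proof (rule grp_ring_normal_star_pair [OF nrm inv ori two x(1)])
    show "\<sigma> x = \<sigma> (x \<otimes> n)" using x nG \<open>\<sigma> n = 1\<close> by (simp add: orientation_mult [OF ori])
    show "x \<noteq> x \<otimes> n" using x nG False by (metis l_cancel_one')
  qed (use x nG in simp)
  moreover have "star x \<otimes> (x \<otimes> n) = n \<otimes> x \<otimes> star x"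
    using x nG sx norm_comm grp_ring_normal_star_commute [OF nrm inv ori x(1)]
    by (metis m_assoc)
  moreover have "star n \<otimes> star x \<otimes> x = star n \<otimes> x \<otimes> star x"
    using x sx sn grp_ring_normal_star_commute [OF nrm inv ori x(1)] by (simp add: m_assoc)
  ultimately have "x \<otimes> star n \<otimes> star x = n \<otimes> x \<otimes> star x \<or>
                   x \<otimes> star n \<otimes> star x = star n \<otimes> x \<otimes> star x"
    using x nG sx sn by (simp add: group_involution_mult [OF inv] m_assoc)
  then have "x \<otimes> star n = star n \<otimes> x \<or> x \<otimes> star n = n \<otimes> x"
    using x nG sx sn by (metis m_closed right_cancel)
  then show ?thesis
    using commutator_twist_cases [OF x(1) nG s star_n] by blast
qed

theorem lemma10:
  fixes G :: "('g, 'b) monoid_scheme"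
    and star :: "'g \<Rightarrow> 'g"
    and \<sigma> :: "'g \<Rightarrow> int"
  assumes "infinite (UNIV :: 'f::field set)"
    and "(2::'f) \<noteq> 0"
    and "group G"
    and "\<not> abelian G"
    and "group_involution G star"
    and "orientation G \<sigma>"
    and "\<exists>g \<in> carrier G. \<sigma> g \<noteq> 1"
    and "\<forall>g \<in> carrier G. g \<otimes>\<^bsub>G\<^esub> star g \<in> orient_kernel G \<sigma>"
    and "grp_ring_normal TYPE('f) G star \<sigma>"
    and "SLC_group (G\<lparr>carrier := orient_kernel G \<sigma>\<rparr>) star"
  shows "\<exists>s. unique_nonid_commutator G s \<and> s \<in> grp_center G"
proof -
  interpret group G by fact
  let ?N = "orient_kernel G \<sigma>"
  have normal: "?N \<lhd> G" using orient_kernel_normal [OF assms(6)] .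
  then have sub: "subgroup ?N G" by (rule normal_imp_subgroup)
  obtain s where s: "unique_nonid_commutator (G\<lparr>carrier := ?N\<rparr>) s"
    using assms(10) by (auto simp: SLC_group_def)
  have s_center: "s \<in> grp_center G" and s_inv: "inv\<^bsub>G\<^esub> s = s"
    using normal_unique_nonid_commutator_central [OF normal s]
      subgroup_unique_nonid_commutator_inv [OF sub s] by auto
  have "commutator G x y \<in> {\<one>\<^bsub>G\<^esub>, s}" if "x \<in> carrier G" "y \<in> carrier G" for x y
  proof (rule commutators_from_orient_kernel [OF assms(6) _ _ _ that])
    show "commutator G a b \<in> {\<one>\<^bsub>G\<^esub>, s}" if "a \<in> ?N" "b \<in> ?N" for a b
      using s that commutators_subgroup [OF sub] by (auto simp: unique_nonid_commutator_def)
    show "commutator G x n \<in> {\<one>\<^bsub>G\<^esub>, s}" if "x \<in> carrier G" "\<sigma> x \<noteq> 1" "n \<in> ?N" for x n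
    proof (rule commutator_outside_kernel [OF assms(9,5,6,2) s_center s_inv that])
      show "x \<otimes>\<^bsub>G\<^esub> star x \<otimes>\<^bsub>G\<^esub> n = n \<otimes>\<^bsub>G\<^esub> (x \<otimes>\<^bsub>G\<^esub> star x)"
        using mult_star_central_in_subgroup [OF assms(5) sub assms(10) s \<open>x \<in> carrier G\<close>] assms(8) that
        by (auto simp: grp_center_def)
      show "star n = n \<or> star n = s \<otimes>\<^bsub>G\<^esub> n"
        using SLC_group_star [OF assms(10) s, of n] that by (auto split: if_splits)
    qed
  qed (use s_inv in auto)
  then show ?thesis
    using unique_nonid_commutator_from_subgroup [OF sub s] s_center by blast
qed

end
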